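(* Let $u,v\ge0$ be integers and let $\beta^{i,j}$ ($0\le i\le u$, $0\le j\le v+1$) be integers such that: (1) all $\beta^{i,j}$ are nonnegative; (2) $\beta^{0,0},\beta^{0,1},\ldots,\beta^{0,v}$ are strictly positive; (3) $\beta^{0,v+1}=0$; (4) for each $0\le i\le u-1$ and $0\le j\le v$, $$\delta^{i,j}:=\beta^{i,j}+\beta^{i+1,j+1}-\beta^{i,j+1}-\beta^{i+1,j}\le0.$$ Then $\beta^{i,j}>0$ for all $0\le i\le u$ and $0\le j\le v$. *)

theory Defs
  imports Main
begin

end

theory Submission
  imports Defs
begin

text \<open>Condition (4) says that the gaps \<open>\<beta> i j - \<beta> i (v + 1)\<close> between two columns can only
  grow when passing from row \<open>i\<close> to row \<open>i + 1\<close>. In row \<open>0\<close> this gap is \<open>\<beta> 0 j > 0\<close>, so in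
  every row \<open>\<beta> i j\<close> exceeds \<open>\<beta> i (v + 1) \<ge> 0\<close>.\<close>

lemma column_gap_mono_Suc:
  fixes f :: "nat \<Rightarrow> nat \<Rightarrow> 'a::ordered_ab_group_add"
  assumes submod: "\<And>j. a \<le> j \<Longrightarrow> j < b \<Longrightarrow>
                     f i j + f (Suc i) (Suc j) \<le> f i (Suc j) + f (Suc i) j"
    and "a \<le> b"
  shows "f i a - f i b \<le> f (Suc i) a - f (Suc i) b"
  using \<open>a \<le> b\<close> submod
proof (induction b rule: dec_induct)
  case base
  then show ?case by simp
next
  case (step b)
  have IH: "f i a - f i b \<le> f (Suc i) a - f (Suc i) b"
    using step.IH step.prems by simp
  have submod_b: "f i b + f (Suc i) (Suc b) \<le> f i (Suc b) + f (Suc i) b"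
    using step.hyps step.prems by simp
  have "f i a - f i (Suc b)
          = (f i a - f i b) + (f i b + f (Suc i) (Suc b) - f i (Suc b)) - f (Suc i) (Suc b)"
    by (simp add: algebra_simps)
  also have "\<dots> \<le> (f (Suc i) a - f (Suc i) b) + f (Suc i) b - f (Suc i) (Suc b)"
    using IH submod_b by (intro diff_right_mono add_mono) (simp_all add: diff_le_eq add.commute)
  also have "\<dots> = f (Suc i) a - f (Suc i) (Suc b)"
    by simp
  finally show ?case .
qed

lemma column_gap_mono:
  fixes f :: "nat \<Rightarrow> nat \<Rightarrow> 'a::ordered_ab_group_add"
  assumes submod: "\<And>i j. k \<le> i \<Longrightarrow> i < l \<Longrightarrow> a \<le> j \<Longrightarrow> j < b \<Longrightarrow>
                     f i j + f (Suc i) (Suc j) \<le> f i (Suc j) + f (Suc i) j"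
    and "a \<le> b" and "k \<le> l"
  shows "f k a - f k b \<le> f l a - f l b"
  using \<open>k \<le> l\<close> submod
proof (induction l rule: dec_induct)
  case base
  then show ?case by simp
next
  case (step l)
  have "f k a - f k b \<le> f l a - f l b"
    using step.IH step.prems by simp
  also have "\<dots> \<le> f (Suc l) a - f (Suc l) b"
    by (rule column_gap_mono_Suc[OF _ \<open>a \<le> b\<close>]) (use step.hyps step.prems in simp)
  finally show ?case .
qed

theorem lemma4p6:
  fixes u v :: nat and \<beta> :: "nat \<Rightarrow> nat \<Rightarrow> int"
  assumes nonneg: "\<And>i j. i \<le> u \<Longrightarrow> j \<le> v + 1 \<Longrightarrow> \<beta> i j \<ge> 0"
    and pos0: "\<And>j. j \<le> v \<Longrightarrow> \<beta> 0 j > 0"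
    and zero: "\<beta> 0 (v + 1) = 0"
    and delta: "\<And>i j. i + 1 \<le> u \<Longrightarrow> j \<le> v \<Longrightarrow>
                  \<beta> i j + \<beta> (i + 1) (j + 1) - \<beta> i (j + 1) - \<beta> (i + 1) j \<le> 0"
  shows "\<forall>i\<le>u. \<forall>j\<le>v. \<beta> i j > 0"
proof (intro allI impI)
  fix i j assume "i \<le> u" "j \<le> v"
  have "\<beta> 0 j - \<beta> 0 (v + 1) \<le> \<beta> i j - \<beta> i (v + 1)"
  proof (rule column_gap_mono)
    fix i' j' assume "i' < i" "j' < v + 1"
    then show "\<beta> i' j' + \<beta> (Suc i') (Suc j') \<le> \<beta> i' (Suc j') + \<beta> (Suc i') j'"
      using delta[of i' j'] \<open>i \<le> u\<close> by simp
  qed (use \<open>j \<le> v\<close> in simp_all)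
  then show "\<beta> i j > 0"
    using pos0[OF \<open>j \<le> v\<close>] zero nonneg[OF \<open>i \<le> u\<close>, of "v + 1"] by simp
qed

end
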